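(* Assume $\mu$ satisfies $(\mathrm H_\mu)$ and let $h_n$ be as in the context. Then $h_n/\ln n\to\infty$ as $n\to\infty$. Moreover, with $b_n$ and $V$ as in the context, $b_n V(b_n)=O(n\ln n)$.
   Context: Condition $(\mathrm H_\mu)$: $\mu=(\mu_k)_{k\ge0}$ is a probability measure on $\mathbb Z_+$ with $\sum_k k\mu_k=1$, and there is a slowly varying function $L:\mathbb R_+\to\mathbb R_+$ with $\mu_n=L(n)/n^2$ for all $n\ge1$. Let $Y\sim\mu$, $X=Y-1$, $(a_n)$ a sequence with $n\mathbf P(Y\ge a_n)\to1$, $b_n=n\mathbf E[X\mathbf 1_{\{|X|>a_n\}}]$, $h_n=\int_1^{n\mathbf E[Y\mathbf 1_{\{Y\ge a_n\}}]}\frac{\mathrm dx}{x\mathbf E[Y\mathbf 1_{\{Y\ge x\}}]}$. With $G_\mu(s)=\sum_k\mu_ks^k$, $\ell_\star(x)=x\big(G_\mu(1-1/x)-1+1/x\big)$ for $x\ge1$, and $V(y)=\int_1^y\frac{\mathrm dx}{x\ell_\star(x)}$. *)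

theory Defs
  imports "HOL-Analysis.Analysis" "HOL-Library.Landau_Symbols"
begin

definition slowly_varying :: "(real \<Rightarrow> real) \<Rightarrow> bool" where
  "slowly_varying L \<longleftrightarrow>
     L \<in> borel_measurable borel \<and> (\<forall>x>0. L x > 0) \<and>
     (\<forall>c>0. ((\<lambda>x. L (c * x) / L x) \<longlongrightarrow> 1) at_top)"

definition H_mu :: "(nat \<Rightarrow> real) \<Rightarrow> bool" where
  "H_mu mu \<longleftrightarrow>
     (\<forall>k. mu k \<ge> 0) \<and> mu sums 1 \<and> (\<lambda>k. real k * mu k) sums 1 \<and>
     (\<exists>L. slowly_varying L \<and> (\<forall>n\<ge>1. mu n = L (real n) / (real n)^2))"

definition tailP :: "(nat \<Rightarrow> real) \<Rightarrow> real \<Rightarrow> real" where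
  "tailP mu x = (\<Sum>k. if x \<le> real k then mu k else 0)"

definition tailE :: "(nat \<Rightarrow> real) \<Rightarrow> real \<Rightarrow> real" where
  "tailE mu x = (\<Sum>k. if x \<le> real k then real k * mu k else 0)"

definition bseq :: "(nat \<Rightarrow> real) \<Rightarrow> (nat \<Rightarrow> real) \<Rightarrow> nat \<Rightarrow> real" where
  "bseq mu a n = real n * (\<Sum>k. if \<bar>real k - 1\<bar> > a n then (real k - 1) * mu k else 0)"

definition hseq :: "(nat \<Rightarrow> real) \<Rightarrow> (nat \<Rightarrow> real) \<Rightarrow> nat \<Rightarrow> real" where
  "hseq mu a n = integral {1 .. real n * tailE mu (a n)} (\<lambda>x. 1 / (x * tailE mu x))"

definition Gmu :: "(nat \<Rightarrow> real) \<Rightarrow> real \<Rightarrow> real" where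
  "Gmu mu s = (\<Sum>k. mu k * s ^ k)"

definition lstar :: "(nat \<Rightarrow> real) \<Rightarrow> real \<Rightarrow> real" where
  "lstar mu x = x * (Gmu mu (1 - 1 / x) - 1 + 1 / x)"

definition Vfun :: "(nat \<Rightarrow> real) \<Rightarrow> real \<Rightarrow> real" where
  "Vfun mu y = integral {1 .. y} (\<lambda>x. 1 / (x * lstar mu x))"

end

theory Submission
  imports Defs "HOL-Real_Asymp.Real_Asymp"
begin

text \<open>Let \<open>E(x) = E[Y; Y \<ge> x]\<close>, the sum of \<open>L(k)/k\<close> over \<open>k \<ge> x\<close>. By Karamata's uniform
  convergence theorem \<open>L\<close> is nearly constant on dyadic blocks, so the block \<open>[2^j, 2^(j+1))\<close>
  contributes about \<open>L(2^j)\<close> to \<open>E\<close>; hence \<open>E(x)/L(x) \<rightarrow> \<infinity>\<close>, while \<open>P(Y \<ge> x) \<ge> L(x)/(C x)\<close>.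

  For \<open>h\<^sub>n\<close>: the tail bound forces \<open>a\<^sub>n \<ge> n^(1/4)\<close>, so the upper limit \<open>n E(a\<^sub>n) \<ge> a\<^sub>n/2\<close> of the
  integral is at least \<open>n^(1/5)\<close>; as \<open>E \<rightarrow> 0\<close>, the integrand \<open>1/(x E(x))\<close> eventually exceeds \<open>M/x\<close>
  for every \<open>M\<close>, so \<open>h\<^sub>n \<ge> M ln n\<close> for large \<open>n\<close>.

  For \<open>b\<^sub>n V(b\<^sub>n)\<close>: \<open>\<ell>\<^sub>\<star>(x) \<ge> E(2x)/2\<close> gives \<open>V(y) \<le> 2 ln y / E(2y)\<close>, and \<open>0 \<le> b\<^sub>n \<le> T\<^sub>n = n E(a\<^sub>n)\<close>.
  The crux is \<open>E(2 T\<^sub>n) \<ge> E(a\<^sub>n)/2\<close>: halving \<open>E\<close> from scale \<open>x\<close> takes a scale factor of order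
  \<open>E(x)/L(x)\<close>, and \<open>T\<^sub>n/a\<^sub>n\<close> is at most of that order because \<open>n P(Y \<ge> a\<^sub>n) \<le> 2\<close>.
  Hence \<open>b\<^sub>n V(b\<^sub>n) \<le> 4 n ln n\<close>.\<close>

lemma eventually_emeasure_good_shifts:
  fixes h :: "real \<Rightarrow> real" and z :: "nat \<Rightarrow> real"
  assumes meas: "h \<in> borel_measurable borel"
    and lim: "\<And>u. ((\<lambda>x. h (x + u) - h x) \<longlongrightarrow> 0) at_top"
    and e: "e > 0" and z: "filterlim z at_top sequentially"
  shows "eventually (\<lambda>N. emeasure lborel {v\<in>{0..2}. \<forall>m\<ge>N. \<bar>h (z m + v) - h (z m)\<bar> < e}
           > ennreal (3/2)) sequentially"
proof -
  define W where "W N = {v\<in>{0..2}. \<forall>m\<ge>N. \<bar>h (z m + v) - h (z m)\<bar> < e}" for N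
  have W_sets: "W N \<in> sets lborel" for N
  proof -
    have "W N = {0..2} \<inter> (\<Inter>m\<in>{N..}. {v. \<bar>h (z m + v) - h (z m)\<bar> < e})"
      by (auto simp: W_def)
    also have "\<dots> \<in> sets lborel"
      using meas by measurable
    finally show ?thesis .
  qed
  have "(\<Union>N. W N) = {0..2}"
  proof (intro equalityI subsetI)
    fix v :: real assume v: "v \<in> {0..2}"
    have "((\<lambda>m. h (z m + v) - h (z m)) \<longlongrightarrow> 0) sequentially"
      using filterlim_compose[OF lim[of v] z] by simp
    hence "eventually (\<lambda>m. \<bar>h (z m + v) - h (z m)\<bar> < e) sequentially"
      using e by (auto dest!: tendstoD[where e = e])
    thus "v \<in> (\<Union>N. W N)" using v by (auto simp: W_def eventually_sequentially)
  qed (auto simp: W_def)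
  moreover have "incseq W" by (auto simp: incseq_def W_def)
  ultimately have "(\<lambda>N. emeasure lborel (W N)) \<longlonglongrightarrow> 2"
    using Lim_emeasure_incseq[of W lborel] W_sets by auto
  moreover have "ennreal (3/2) < 2" by (simp add: ennreal_less_iff)
  ultimately show ?thesis
    unfolding W_def[symmetric] by (rule order_tendstoD(1))
qed

text \<open>For a bad pair \<open>x, x + u\<close>, the shifts
  that are good at \<open>x\<close> and those good at \<open>x + u\<close> (translated by \<open>u\<close>) both have measure above \<open>3/2\<close>
  inside \<open>[0, 3]\<close>, so some \<open>x + w\<close> is within \<open>e/2\<close> of both \<open>h x\<close> and \<open>h (x + u)\<close>.\<close>
lemma uniform_convergence_additive:
  fixes h :: "real \<Rightarrow> real"
  assumes meas: "h \<in> borel_measurable borel"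
    and lim: "\<And>u. ((\<lambda>x. h (x + u) - h x) \<longlongrightarrow> 0) at_top"
    and e: "e > 0"
  shows "\<exists>X. \<forall>x\<ge>X. \<forall>u\<in>{0..1}. \<bar>h (x + u) - h x\<bar> \<le> e"
proof (rule ccontr)
  assume "\<not> ?thesis"
  hence "\<forall>n::nat. \<exists>x\<ge>real n. \<exists>u\<in>{0..1}. \<bar>h (x + u) - h x\<bar> > e"
    by (meson not_le)
  then obtain xs us where xs: "\<And>n. xs n \<ge> real n" and us: "\<And>n. us n \<in> {0..1}"
    and bad: "\<And>n. \<bar>h (xs n + us n) - h (xs n)\<bar> > e"
    by metis
  define ys where "ys n = xs n + us n" for n
  have "real n \<le> ys n" for n
    using xs[of n] us[of n] by (simp add: ys_def)
  hence "filterlim xs at_top sequentially" "filterlim ys at_top sequentially"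
    using xs by (auto intro!: filterlim_at_top_mono[OF filterlim_real_sequentially])
  then obtain N where
    U: "emeasure lborel {v\<in>{0..2}. \<forall>m\<ge>N. \<bar>h (xs m + v) - h (xs m)\<bar> < e/2} > ennreal (3/2)"
    and V: "emeasure lborel {v\<in>{0..2}. \<forall>m\<ge>N. \<bar>h (ys m + v) - h (ys m)\<bar> < e/2} > ennreal (3/2)"
    using eventually_conj[OF eventually_emeasure_good_shifts[OF meas lim, of "e/2" xs]
        eventually_emeasure_good_shifts[OF meas lim, of "e/2" ys]] e
    by (auto simp: eventually_sequentially)
  define U where "U = {v\<in>{0..2}. \<bar>h (xs N + v) - h (xs N)\<bar> < e/2}"
  define V0 where "V0 = {v\<in>{0..2}. \<bar>h (ys N + v) - h (ys N)\<bar> < e/2}"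
  define V where "V = (+) (- us N) -` V0"
  have sets: "U \<in> sets lborel" "V0 \<in> sets lborel"
    unfolding U_def V0_def using meas by measurable
  hence "V \<in> sets lborel"
    using measurable_sets[of "(+) (- us N)" lborel lborel V0] by (simp add: V_def)
  have "emeasure lborel V = emeasure (distr lborel borel ((+) (- us N))) V0"
    using sets(2) by (simp add: emeasure_distr V_def)
  also have "\<dots> = emeasure lborel V0"
    by (simp add: lborel_distr_plus)
  finally have "emeasure lborel V = emeasure lborel V0" .
  have "U \<inter> V \<noteq> {}"
  proof
    assume disj: "U \<inter> V = {}"
    have U_big: "ennreal (3/2) < emeasure lborel U"
      using U by (rule order.strict_trans2) (rule emeasure_mono[OF _ sets(1)], auto simp: U_def)
    have V_big: "ennreal (3/2) < emeasure lborel V"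
      using V unfolding \<open>emeasure lborel V = emeasure lborel V0\<close>
      by (rule order.strict_trans2) (rule emeasure_mono[OF _ sets(2)], auto simp: V0_def)
    have "ennreal 3 = ennreal (3/2) + ennreal (3/2)"
      by (simp flip: ennreal_plus)
    also have "\<dots> < ennreal (3/2) + emeasure lborel V"
      using V_big by (simp add: ennreal_add_left_cancel_less)
    also have "\<dots> \<le> emeasure lborel U + emeasure lborel V"
      using U_big by (intro add_right_mono) simp
    also have "\<dots> = emeasure lborel (U \<union> V)"
      by (rule plus_emeasure[OF sets(1) \<open>V \<in> sets lborel\<close> disj])
    also have "\<dots> \<le> emeasure lborel {0..3::real}"
      using us[of N] by (intro emeasure_mono) (auto simp: U_def V_def V0_def)
    finally show False by simp
  qed
  then obtain w where "w \<in> U" "w \<in> V" by blast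
  hence "\<bar>h (xs N + w) - h (xs N)\<bar> < e/2" "\<bar>h (xs N + w) - h (xs N + us N)\<bar> < e/2"
    by (auto simp: U_def V_def V0_def ys_def algebra_simps)
  thus False using bad[of N] by linarith
qed

lemma slowly_varying_uniform_doubling:
  assumes L: "slowly_varying L" and c: "c > 1"
  shows "\<exists>X. \<forall>x\<ge>X. \<forall>y\<in>{x..2*x}. L y \<le> c * L x \<and> L x \<le> c * L y"
proof -
  have L_pos: "\<And>x. x > 0 \<Longrightarrow> L x > 0"
    using L by (auto simp: slowly_varying_def)
  define h where "h t = ln (L (exp t))" for t
  have "h \<in> borel_measurable borel"
    unfolding h_def using L by (auto simp: slowly_varying_def)
  moreover have "((\<lambda>t. h (t + u) - h t) \<longlongrightarrow> 0) at_top" for u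
  proof -
    have "((\<lambda>x. L (exp u * x) / L x) \<longlongrightarrow> 1) at_top"
      using L by (simp add: slowly_varying_def)
    hence "((\<lambda>t. L (exp u * exp t) / L (exp t)) \<longlongrightarrow> 1) at_top"
      using filterlim_compose[OF _ exp_at_top] by blast
    hence "((\<lambda>t. ln (L (exp u * exp t) / L (exp t))) \<longlongrightarrow> ln 1) at_top"
      by (rule tendsto_ln) simp
    moreover have "ln (L (exp u * exp t) / L (exp t)) = h (t + u) - h t" for t
      using L_pos[of "exp t"] L_pos[of "exp u * exp t"]
      by (simp add: h_def ln_div exp_add mult.commute)
    ultimately show ?thesis by simp
  qed
  ultimately obtain T where T: "\<And>t u. t \<ge> T \<Longrightarrow> u \<in> {0..1} \<Longrightarrow> \<bar>h (t + u) - h t\<bar> \<le> ln c"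
    using uniform_convergence_additive[of h "ln c"] c by (auto simp del: atLeastAtMost_iff)
  have "L y \<le> c * L x \<and> L x \<le> c * L y" if x: "x \<ge> exp T" and y: "y \<in> {x..2*x}" for x y
  proof -
    have pos: "x > 0" "y > 0"
      using x y exp_gt_zero[of T] by (auto simp del: exp_gt_zero)
    have "ln y \<le> ln (2 * x)"
      using y pos by simp
    moreover have "ln 2 \<le> (1::real)"
      using ln_le_minus_one[of 2] by simp
    ultimately have "ln y - ln x \<in> {0..1}"
      using y pos by (auto simp: ln_mult)
    moreover have "ln x \<ge> T"
      using x pos by (metis exp_le_cancel_iff exp_ln)
    ultimately have "\<bar>ln (L y) - ln (L x)\<bar> \<le> ln c"
      using T[of "ln x" "ln y - ln x"] pos by (simp add: h_def)
    hence "ln (L y) \<le> ln (c * L x)" "ln (L x) \<le> ln (c * L y)"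
      using L_pos[OF pos(1)] L_pos[OF pos(2)] c by (simp_all add: ln_mult)
    thus ?thesis
      using L_pos[OF pos(1)] L_pos[OF pos(2)] c by simp
  qed
  thus ?thesis by (intro exI[of _ "exp T"]) auto
qed

lemma has_integral_const_div:
  fixes a b c :: real
  assumes "0 < a" "a \<le> b"
  shows "((\<lambda>x. c / x) has_integral (c * (ln b - ln a))) {a..b}"
proof -
  have "((\<lambda>x. c / x) has_integral (c * ln b - c * ln a)) {a..b}"
  proof (rule fundamental_theorem_of_calculus[OF assms(2)])
    fix x assume "x \<in> {a..b}"
    hence "x > 0" using assms by auto
    hence "((\<lambda>x. c * ln x) has_real_derivative c * (1/x)) (at x within {a..b})"
      by (auto intro!: derivative_eq_intros)
    thus "((\<lambda>x. c * ln x) has_vector_derivative c / x) (at x within {a..b})"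
      by (simp add: has_real_derivative_iff_has_vector_derivative)
  qed
  thus ?thesis by (simp add: algebra_simps)
qed

lemma real_dyadic_interval:
  fixes x :: real
  assumes "x \<ge> 1"
  obtains i where "2^i \<le> x" "x < 2^(i+1)"
proof -
  define k where "k = nat \<lfloor>x\<rfloor>"
  have "k \<ge> 1" "real k \<le> x" "x < real k + 1"
    using assms unfolding k_def by linarith+
  moreover obtain i where "2^i \<le> k" "k < 2^(i+1)"
    using ex_power_ivl1[OF _ \<open>k \<ge> 1\<close>, of 2] by auto
  hence "(2::real)^i \<le> real k" "real k + 1 \<le> 2^(i+1)"
    by (metis of_nat_le_iff of_nat_numeral of_nat_power,
        metis Suc_eq_plus1 Suc_leI of_nat_1 of_nat_add of_nat_le_iff of_nat_numeral of_nat_power)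
  ultimately show ?thesis
    using that[of i] by linarith
qed

locale critical_slowly_varying =
  fixes mu :: "nat \<Rightarrow> real" and L :: "real \<Rightarrow> real"
  assumes mu_nonneg: "\<And>k. mu k \<ge> 0" and mu_sums: "mu sums 1"
    and mean_sums: "(\<lambda>k. real k * mu k) sums 1"
    and slowly_varying: "slowly_varying L"
    and mu_eq: "\<And>n. n \<ge> 1 \<Longrightarrow> mu n = L (real n) / (real n)^2"
begin

lemma L_pos: "x > 0 \<Longrightarrow> L x > 0"
  using slowly_varying by (auto simp: slowly_varying_def)

lemma mult_mu_eq: "n \<ge> 1 \<Longrightarrow> real n * mu n = L (real n) / real n"
  using mu_eq[of n] by (simp add: power2_eq_square)

lemma mu_pos: "n \<ge> 1 \<Longrightarrow> mu n > 0"
  using mu_eq[of n] L_pos[of "real n"] by simp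

lemma summable_tailP_terms: "summable (\<lambda>k. if x \<le> real k then mu k else 0)"
  by (rule summable_comparison_test[OF _ sums_summable[OF mu_sums]]) (auto simp: mu_nonneg)

lemma summable_tailE_terms: "summable (\<lambda>k. if x \<le> real k then real k * mu k else 0)"
  by (rule summable_comparison_test[OF _ sums_summable[OF mean_sums]]) (auto simp: mu_nonneg)

lemma tailE_antimono: "x \<le> y \<Longrightarrow> tailE mu y \<le> tailE mu x"
  unfolding tailE_def
  by (rule suminf_le[OF _ summable_tailE_terms summable_tailE_terms]) (auto simp: mu_nonneg)

lemma tailP_antimono: "x \<le> y \<Longrightarrow> tailP mu y \<le> tailP mu x"
  unfolding tailP_def
  by (rule suminf_le[OF _ summable_tailP_terms summable_tailP_terms]) (auto simp: mu_nonneg)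

lemma tailE_le_1: "tailE mu x \<le> 1"
proof -
  have "tailE mu x \<le> (\<Sum>k. real k * mu k)"
    unfolding tailE_def
    by (rule suminf_le[OF _ summable_tailE_terms sums_summable[OF mean_sums]]) (auto simp: mu_nonneg)
  thus ?thesis using mean_sums by (simp add: sums_iff)
qed

lemma tailE_split:
  assumes "p \<le> q"
  shows "tailE mu (real p) = (\<Sum>k\<in>{p..<q}. real k * mu k) + tailE mu (real q)"
proof -
  have "tailE mu (real p) - tailE mu (real q) =
      (\<Sum>k. (if real p \<le> real k then real k * mu k else 0) - (if real q \<le> real k then real k * mu k else 0))"
    unfolding tailE_def by (rule suminf_diff[OF summable_tailE_terms summable_tailE_terms])
  also have "\<dots> = (\<Sum>k\<in>{p..<q}. (if real p \<le> real k then real k * mu k else 0) - (if real q \<le> real k then real k * mu k else 0))"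
    by (rule suminf_finite) (use assms in auto)
  also have "\<dots> = (\<Sum>k\<in>{p..<q}. real k * mu k)"
    by (intro sum.cong) auto
  finally show ?thesis by simp
qed

lemma tailE_pos: "tailE mu x > 0"
proof -
  define k where "k = max 1 (nat \<lceil>x\<rceil>)"
  have "x \<le> real k" "k \<ge> 1"
    unfolding k_def by linarith+
  have "0 < real k * mu k"
    using mu_pos[OF \<open>k \<ge> 1\<close>] \<open>k \<ge> 1\<close> by simp
  also have "\<dots> = (\<Sum>j\<in>{k}. if x \<le> real j then real j * mu j else 0)"
    using \<open>x \<le> real k\<close> by simp
  also have "\<dots> \<le> tailE mu x"
    unfolding tailE_def by (rule sum_le_suminf[OF summable_tailE_terms]) (auto simp: mu_nonneg)
  finally show ?thesis .
qed

lemma mult_tailP_le_tailE: "x \<ge> 0 \<Longrightarrow> x * tailP mu x \<le> tailE mu x"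
  unfolding tailP_def tailE_def
  by (subst suminf_mult[OF summable_tailP_terms, symmetric])
    (auto intro!: suminf_le summable_mult summable_tailP_terms summable_tailE_terms
      mult_right_mono mu_nonneg)

lemma tailE_diff_le_mult_tailP:
  assumes "y \<ge> 0"
  shows "tailE mu x - tailE mu y \<le> y * tailP mu x"
proof -
  have "tailE mu x - tailE mu y =
      (\<Sum>k. (if x \<le> real k then real k * mu k else 0) - (if y \<le> real k then real k * mu k else 0))"
    unfolding tailE_def by (rule suminf_diff[OF summable_tailE_terms summable_tailE_terms])
  also have "\<dots> \<le> (\<Sum>k. y * (if x \<le> real k then mu k else 0))"
    using assms mu_nonneg
    by (intro suminf_le summable_diff summable_mult summable_tailE_terms summable_tailP_terms)
      (auto intro: mult_right_mono)
  also have "\<dots> = y * tailP mu x"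
    unfolding tailP_def by (rule suminf_mult[OF summable_tailP_terms])
  finally show ?thesis .
qed

lemma tailE_tendsto_0: "(tailE mu \<longlongrightarrow> 0) at_top"
proof -
  let ?a = "\<lambda>k x. if x \<le> real k then real k * mu k else 0"
  have "((\<lambda>x. \<Sum>k. ?a k x) \<longlongrightarrow> (\<Sum>k. 0)) at_top"
  proof (rule tannerys_theorem[where M = "\<lambda>k. real k * mu k", THEN conjunct2, THEN conjunct2])
    show "((\<lambda>x. ?a k x) \<longlongrightarrow> 0) at_top" for k
      by (rule tendsto_eventually) (use eventually_gt_at_top[of "real k"] in \<open>eventually_elim, simp\<close>)
    show "\<forall>\<^sub>F (k, x) in at_top \<times>\<^sub>F at_top. norm (?a k x) \<le> real k * mu k"
      by (rule always_eventually) (simp add: mu_nonneg)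
  qed (use mean_sums in \<open>auto simp: sums_iff\<close>)
  thus ?thesis unfolding tailE_def[abs_def] by simp
qed

lemma L_dyadic_growth:
  assumes c: "c > 1"
  obtains J where "\<And>i t. i \<ge> J \<Longrightarrow> L (2^(i+t)) \<le> c^t * L (2^i) \<and> L (2^i) \<le> c^t * L (2^(i+t))"
proof -
  obtain X where X: "\<And>x y. x \<ge> X \<Longrightarrow> y \<in> {x..2*x} \<Longrightarrow> L y \<le> c * L x \<and> L x \<le> c * L y"
    using slowly_varying_uniform_doubling[OF slowly_varying c] by blast
  obtain J :: nat where J: "X \<le> 2^J"
    using real_arch_pow[of 2 X] by (auto intro: less_imp_le)
  have "L (2^(i+t)) \<le> c^t * L (2^i) \<and> L (2^i) \<le> c^t * L (2^(i+t))" if i: "i \<ge> J" for i t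
  proof (induction t)
    case (Suc t)
    have "X \<le> 2^(i+t)"
      using J i by (meson le_add1 one_le_numeral order_trans power_increasing)
    hence step: "L (2^(i+Suc t)) \<le> c * L (2^(i+t))" "L (2^(i+t)) \<le> c * L (2^(i+Suc t))"
      using X[of "2^(i+t)" "2^(i+Suc t)"] by auto
    show ?case
      using Suc step c by (auto simp: mult.assoc intro: order_trans mult_left_mono)
  qed simp
  thus ?thesis using that by blast
qed

lemma L_dyadic_block:
  obtains J where
    "\<And>j k. j \<ge> J \<Longrightarrow> 2^j \<le> k \<Longrightarrow> k \<le> 2^(j+1) \<Longrightarrow> L (2^j) / 2 \<le> L (real k) \<and> L (real k) \<le> 2 * L (2^j)"
proof -
  obtain X where X: "\<And>x y. x \<ge> X \<Longrightarrow> y \<in> {x..2*x} \<Longrightarrow> L y \<le> 2 * L x \<and> L x \<le> 2 * L y"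
    using slowly_varying_uniform_doubling[OF slowly_varying, of 2] by (auto simp del: atLeastAtMost_iff)
  obtain J :: nat where J: "X \<le> 2^J"
    using real_arch_pow[of 2 X] by (auto intro: less_imp_le)
  have "L (2^j) / 2 \<le> L (real k) \<and> L (real k) \<le> 2 * L (2^j)"
    if "j \<ge> J" "2^j \<le> k" "k \<le> 2^(j+1)" for j k
  proof -
    have "X \<le> 2^j"
      using J that(1) by (meson one_le_numeral order_trans power_increasing)
    moreover have "(2::real)^j \<le> real k"
      using that(2) by (metis of_nat_le_iff of_nat_numeral of_nat_power)
    moreover have "real k \<le> 2 * 2^j"
      using that(3) by (metis of_nat_le_iff of_nat_numeral of_nat_power power_Suc Suc_eq_plus1)
    ultimately show ?thesis
      using X[of "2^j" "real k"] by simp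
  qed
  thus ?thesis using that by blast
qed

lemma L_dyadic_ratio_tendsto: "((\<lambda>i. L (2^(i+t)) / L (2^i)) \<longlongrightarrow> 1) sequentially"
proof -
  have "((\<lambda>x. L (2^t * x) / L x) \<longlongrightarrow> 1) at_top"
    using slowly_varying by (simp add: slowly_varying_def)
  moreover have "filterlim (\<lambda>i::nat. (2::real)^i) at_top sequentially"
    by real_asymp
  ultimately have "((\<lambda>i. L (2^t * 2^i) / L (2^i)) \<longlongrightarrow> 1) sequentially"
    by (rule filterlim_compose)
  thus ?thesis by (simp add: power_add mult.commute)
qed

definition dyadic_mass :: "nat \<Rightarrow> real" where
  "dyadic_mass j = tailE mu (2^j) - tailE mu (2^(j+1))"

lemma dyadic_mass_eq_sum: "dyadic_mass j = (\<Sum>k\<in>{2^j..<2^(j+1)}. real k * mu k)"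
  using tailE_split[of "2^j" "2^(j+1)"] by (simp add: dyadic_mass_def)

lemma tailE_dyadic_telescope:
  "tailE mu (2^i) - tailE mu (2^(i+T)) = (\<Sum>t<T. dyadic_mass (i+t))"
  using sum_lessThan_telescope'[of "\<lambda>t. tailE mu (2^(i+t))" T]
  by (simp add: dyadic_mass_def)

lemma dyadic_mass_bounds:
  obtains J where "\<And>j. j \<ge> J \<Longrightarrow> L (2^j) / 4 \<le> dyadic_mass j \<and> dyadic_mass j \<le> 2 * L (2^j)"
proof -
  obtain J where J: "\<And>j k. j \<ge> J \<Longrightarrow> 2^j \<le> k \<Longrightarrow> k \<le> 2^(j+1) \<Longrightarrow>
      L (2^j) / 2 \<le> L (real k) \<and> L (real k) \<le> 2 * L (2^j)"
    using L_dyadic_block by blast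
  have "L (2^j) / 4 \<le> dyadic_mass j \<and> dyadic_mass j \<le> 2 * L (2^j)" if j: "j \<ge> J" for j
  proof -
    have term_bounds: "L (2^j) / 2^(j+2) \<le> real k * mu k \<and> real k * mu k \<le> 2 * L (2^j) / 2^j"
      if k: "k \<in> {2^j..<2^(j+1)}" for k
    proof -
      have kr: "(2::real)^j \<le> real k" "real k \<le> 2^(j+1)"
        using k by (metis atLeastLessThan_iff of_nat_le_iff of_nat_numeral of_nat_power,
            metis atLeastLessThan_iff less_imp_le of_nat_le_iff of_nat_numeral of_nat_power)
      have "k \<ge> 1"
        using k by (metis atLeastLessThan_iff dual_order.trans one_le_numeral one_le_power)
      have Lk: "L (2^j) / 2 \<le> L (real k)" "L (real k) \<le> 2 * L (2^j)"
        using J[OF j] k by auto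
      have "(L (2^j) / 2) / 2^(j+1) \<le> L (real k) / real k"
        using kr Lk L_pos[of "2^j"] \<open>k \<ge> 1\<close> by (intro frac_le) auto
      moreover have "L (real k) / real k \<le> (2 * L (2^j)) / 2^j"
        using kr Lk L_pos[of "2^j"] \<open>k \<ge> 1\<close> by (intro frac_le) auto
      ultimately show ?thesis
        using mult_mu_eq[OF \<open>k \<ge> 1\<close>] by (simp add: field_simps)
    qed
    have card: "card {(2::nat)^j..<2^(j+1)} = 2^j"
      by simp
    have "L (2^j) / 4 = (\<Sum>k\<in>{(2::nat)^j..<2^(j+1)}. L (2^j) / 2^(j+2))"
      using card by (simp add: field_simps power_add)
    also have "\<dots> \<le> dyadic_mass j"
      unfolding dyadic_mass_eq_sum using term_bounds by (intro sum_mono) auto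
    finally have "L (2^j) / 4 \<le> dyadic_mass j" .
    moreover have "dyadic_mass j \<le> (\<Sum>k\<in>{(2::nat)^j..<2^(j+1)}. 2 * L (2^j) / 2^j)"
      unfolding dyadic_mass_eq_sum using term_bounds by (intro sum_mono) auto
    ultimately show ?thesis
      using card by simp
  qed
  thus ?thesis using that by blast
qed

lemma tailE_over_L_dyadic_tendsto: "filterlim (\<lambda>i. tailE mu (2^i) / L (2^i)) at_top sequentially"
  unfolding filterlim_at_top
proof
  fix Z :: real
  obtain J where J: "\<And>j. j \<ge> J \<Longrightarrow> L (2^j) / 4 \<le> dyadic_mass j \<and> dyadic_mass j \<le> 2 * L (2^j)"
    using dyadic_mass_bounds by blast
  define K where "K = nat \<lceil>8 * Z\<rceil> + 1"
  have "((\<lambda>i. \<Sum>t<K. L (2^(i+t)) / L (2^i)) \<longlongrightarrow> (\<Sum>t<K. 1)) sequentially"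
    by (intro tendsto_sum L_dyadic_ratio_tendsto)
  moreover have "real K / 2 < (\<Sum>t<K. 1::real)"
    unfolding K_def by simp
  ultimately have "eventually (\<lambda>i. real K / 2 < (\<Sum>t<K. L (2^(i+t)) / L (2^i))) sequentially"
    by (rule order_tendstoD(1))
  thus "eventually (\<lambda>i. Z \<le> tailE mu (2^i) / L (2^i)) sequentially"
    using eventually_ge_at_top[of J]
  proof eventually_elim
    case (elim i)
    have "L (2^i) * (real K / 2) \<le> L (2^i) * (\<Sum>t<K. L (2^(i+t)) / L (2^i))"
      using elim(1) L_pos[of "2^i"] by (intro mult_left_mono) auto
    also have "\<dots> = (\<Sum>t<K. L (2^(i+t)))"
      using L_pos[of "2^i"] by (simp add: sum_distrib_left)
    also have "\<dots> \<le> 4 * (\<Sum>t<K. dyadic_mass (i+t))"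
      unfolding sum_distrib_left
    proof (rule sum_mono)
      fix t assume "t \<in> {..<K}"
      show "L (2^(i+t)) \<le> 4 * dyadic_mass (i+t)"
        using J[of "i+t"] elim(2) by simp
    qed
    also have "\<dots> = 4 * (tailE mu (2^i) - tailE mu (2^(i+K)))"
      by (simp add: tailE_dyadic_telescope)
    also have "\<dots> \<le> 4 * tailE mu (2^i)"
      using tailE_pos[of "2^(i+K)"] by simp
    finally have "real K / 8 \<le> tailE mu (2^i) / L (2^i)"
      using L_pos[of "2^i"] by (simp add: field_simps)
    moreover have "8 * Z \<le> real K"
      unfolding K_def by linarith
    ultimately show ?case by linarith
  qed
qed

lemma tailP_dyadic_lower:
  obtains J where "\<And>i x. i \<ge> J \<Longrightarrow> x \<le> 2^(i+1) \<Longrightarrow> L (2^(i+1)) / 2^(i+4) \<le> tailP mu x"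
proof -
  obtain J where J: "\<And>j. j \<ge> J \<Longrightarrow> L (2^j) / 4 \<le> dyadic_mass j \<and> dyadic_mass j \<le> 2 * L (2^j)"
    using dyadic_mass_bounds by blast
  have "L (2^(i+1)) / 2^(i+4) \<le> tailP mu x" if "i \<ge> J" "x \<le> 2^(i+1)" for i x
  proof -
    have "L (2^(i+1)) / 4 \<le> tailE mu (2^(i+1)) - tailE mu (2^(i+2))"
      using J[of "i+1"] that(1) by (simp add: dyadic_mass_def)
    also have "\<dots> \<le> 2^(i+2) * tailP mu (2^(i+1))"
      by (rule tailE_diff_le_mult_tailP) simp
    also have "\<dots> \<le> 2^(i+2) * tailP mu x"
      using that(2) by (intro mult_left_mono tailP_antimono) auto
    finally show ?thesis
      by (simp add: field_simps power_add)
  qed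
  thus ?thesis using that by blast
qed

lemma tailE_dyadic_decrement:
  assumes c: "c > 1"
  obtains J where "\<And>i T. i \<ge> J \<Longrightarrow> tailE mu (2^i) - tailE mu (2^(i+T)) \<le> 2 * T * c^T * L (2^i)"
proof -
  obtain J1 where J1: "\<And>j. j \<ge> J1 \<Longrightarrow> L (2^j) / 4 \<le> dyadic_mass j \<and> dyadic_mass j \<le> 2 * L (2^j)"
    using dyadic_mass_bounds by blast
  obtain J2 where J2: "\<And>i t. i \<ge> J2 \<Longrightarrow> L (2^(i+t)) \<le> c^t * L (2^i) \<and> L (2^i) \<le> c^t * L (2^(i+t))"
    using L_dyadic_growth[OF c] by blast
  have "tailE mu (2^i) - tailE mu (2^(i+T)) \<le> 2 * T * c^T * L (2^i)" if "i \<ge> max J1 J2" for i T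
  proof -
    have "dyadic_mass (i+t) \<le> 2 * c^T * L (2^i)" if "t < T" for t
    proof -
      have "c^t \<le> c^T"
        using \<open>t < T\<close> c by (intro power_increasing) auto
      hence "c^t * L (2^i) \<le> c^T * L (2^i)"
        using L_pos[of "2^i"] by (intro mult_right_mono) auto
      thus ?thesis
        using J1[of "i+t"] J2[of i t] \<open>i \<ge> max J1 J2\<close> by auto
    qed
    hence "(\<Sum>t<T. dyadic_mass (i+t)) \<le> (\<Sum>t<T. 2 * c^T * L (2^i))"
      by (intro sum_mono) auto
    thus ?thesis
      by (simp add: tailE_dyadic_telescope)
  qed
  thus ?thesis using that[of "max J1 J2"] by blast
qed

text \<open>With \<open>R = tailE/L\<close> at \<open>2^i\<close> and \<open>c = 2^(1/4)\<close>, the \<open>T \<approx> log\<^sub>2 R\<close> dyadic blocks beyond \<open>2^i\<close>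
  carry mass at most \<open>2 T c^T L \<approx> R^(1/4) log R \<cdot> L\<close>, eventually below half of \<open>tailE = R L\<close>.\<close>
lemma tailE_half_life:
  obtains I where
    "\<And>i y. i \<ge> I \<Longrightarrow> y \<le> 128 * (tailE mu (2^i) / L (2^i)) * 2^i \<Longrightarrow> tailE mu (2^i) \<le> 2 * tailE mu y"
proof -
  define c :: real where "c = 2 powr (1/4)"
  have "c > 1"
    by (simp add: c_def)
  then obtain J1 where J1:
      "\<And>i T. i \<ge> J1 \<Longrightarrow> tailE mu (2^i) - tailE mu (2^(i+T)) \<le> 2 * T * c^T * L (2^i)"
    using tailE_dyadic_decrement by blast
  have "eventually (\<lambda>R::real. 4 * (log 2 (128*R) + 1) * 2 powr ((log 2 (128*R) + 1)/4) \<le> R) at_top"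
    by real_asymp
  then obtain R0 where R0: "\<And>R. R \<ge> R0 \<Longrightarrow> 4 * (log 2 (128*R) + 1) * 2 powr ((log 2 (128*R) + 1)/4) \<le> R"
    by (auto simp: eventually_at_top_linorder)
  obtain J2 where J2: "\<And>i. i \<ge> J2 \<Longrightarrow> max R0 1 \<le> tailE mu (2^i) / L (2^i)"
    using tailE_over_L_dyadic_tendsto unfolding filterlim_at_top eventually_sequentially by blast
  have "tailE mu (2^i) \<le> 2 * tailE mu y"
    if i: "i \<ge> max J1 J2" and y: "y \<le> 128 * (tailE mu (2^i) / L (2^i)) * 2^i" for i y
  proof -
    define R where "R = tailE mu (2^i) / L (2^i)"
    have R: "R \<ge> R0" "R \<ge> 1"
      using J2[of i] i by (auto simp: R_def)
    have E_eq: "tailE mu (2^i) = R * L (2^i)"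
      using L_pos[of "2^i"] by (simp add: R_def)
    define T where "T = nat \<lceil>log 2 (128 * R)\<rceil>"
    have T: "log 2 (128 * R) \<le> real T" "real T \<le> log 2 (128 * R) + 1"
      using R unfolding T_def by (simp_all add: of_nat_ceiling)
    have "y \<le> 128 * R * 2^i"
      using y by (simp add: R_def)
    also have "128 * R = 2 powr (log 2 (128 * R))"
      using R by simp
    also have "\<dots> \<le> 2^T"
      using T by (simp add: powr_realpow[symmetric] del: powr_log_cancel)
    finally have y_le: "y \<le> 2^(i+T)"
      by (simp add: power_add mult.commute)
    have "c^T = 2 powr (real T / 4)"
      by (simp add: c_def powr_realpow[symmetric] powr_powr)
    also have "\<dots> \<le> 2 powr ((log 2 (128 * R) + 1) / 4)"
      using T by (intro powr_mono) auto
    finally have "2 * real T * c^T \<le> 2 * (log 2 (128 * R) + 1) * 2 powr ((log 2 (128 * R) + 1) / 4)"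
      using T \<open>c > 1\<close> by (intro mult_mono) auto
    also have "\<dots> \<le> R / 2"
      using R0[OF R(1)] by (simp add: algebra_simps)
    finally have "2 * real T * c^T \<le> R / 2" .
    hence "2 * real T * c^T * L (2^i) \<le> R / 2 * L (2^i)"
      using L_pos[of "2^i"] by (intro mult_right_mono) auto
    hence "tailE mu (2^i) - tailE mu (2^(i+T)) \<le> R / 2 * L (2^i)"
      using J1[of i T] i by simp
    moreover have "tailE mu (2^(i+T)) \<le> tailE mu y"
      using y_le by (rule tailE_antimono)
    ultimately show ?thesis
      using E_eq by simp
  qed
  thus ?thesis using that[of "max J1 J2"] by blast
qed

lemma tailE_stable_at_scale:
  obtains X where
    "\<And>x n. x \<ge> X \<Longrightarrow> real n * tailP mu x \<le> 2 \<Longrightarrow> tailE mu x \<le> 2 * tailE mu (2 * real n * tailE mu x)"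
proof -
  obtain I1 where I1: "\<And>i y. i \<ge> I1 \<Longrightarrow> y \<le> 128 * (tailE mu (2^i) / L (2^i)) * 2^i \<Longrightarrow>
      tailE mu (2^i) \<le> 2 * tailE mu y"
    using tailE_half_life by blast
  obtain I2 where I2: "\<And>i t. i \<ge> I2 \<Longrightarrow> L (2^(i+t)) \<le> 2^t * L (2^i) \<and> L (2^i) \<le> 2^t * L (2^(i+t))"
    using L_dyadic_growth[of 2] by auto
  obtain I3 where I3: "\<And>i x. i \<ge> I3 \<Longrightarrow> x \<le> 2^(i+1) \<Longrightarrow> L (2^(i+1)) / 2^(i+4) \<le> tailP mu x"
    using tailP_dyadic_lower by blast
  define I where "I = max I1 (max I2 I3)"
  have "tailE mu x \<le> 2 * tailE mu (2 * real n * tailE mu x)"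
    if x: "x \<ge> 2^I" and n: "real n * tailP mu x \<le> 2" for x n
  proof -
    have "x \<ge> 1"
      using x one_le_power[of "2::real" I] by linarith
    then obtain i where i: "2^i \<le> x" "x < 2^(i+1)"
      by (rule real_dyadic_interval)
    have "(2::real)^I < 2^(i+1)"
      using x i by simp
    hence "I \<le> i"
      using power_strict_increasing_iff[of "2::real" I "i+1"] by simp
    have "L (2^i) / 2^(i+5) \<le> L (2^(i+1)) / 2^(i+4)"
      using I2[of i 1] \<open>I \<le> i\<close> by (simp add: I_def field_simps power_add)
    also have "\<dots> \<le> tailP mu x"
      using I3[of i x] \<open>I \<le> i\<close> i by (simp add: I_def)
    finally have "real n * (L (2^i) / 2^(i+5)) \<le> 2"
      using n by (meson mult_left_mono of_nat_0_le_iff order_trans)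
    hence nL: "real n * L (2^i) \<le> 2^(i+6)"
      by (simp add: field_simps power_add)
    have E_le: "tailE mu x \<le> tailE mu (2^i)"
      using i by (intro tailE_antimono) auto
    have "2 * real n * tailE mu x \<le> 2 * (real n * L (2^i)) * (tailE mu (2^i) / L (2^i))"
      using E_le L_pos[of "2^i"] by (simp add: mult_left_mono)
    also have "\<dots> \<le> 2 * 2^(i+6) * (tailE mu (2^i) / L (2^i))"
      using nL tailE_pos[of "2^i"] L_pos[of "2^i"] by (intro mult_right_mono mult_left_mono) auto
    finally have "2 * real n * tailE mu x \<le> 128 * (tailE mu (2^i) / L (2^i)) * 2^i"
      by (simp add: power_add mult_ac)
    hence "tailE mu (2^i) \<le> 2 * tailE mu (2 * real n * tailE mu x)"
      using I1 \<open>I \<le> i\<close> by (simp add: I_def)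
    thus ?thesis
      using E_le by linarith
  qed
  thus ?thesis using that[of "2^I"] by blast
qed

lemma tailP_quadratic_lower:
  obtains c Y where "c > 0" "\<And>y. y \<ge> Y \<Longrightarrow> c / y^2 \<le> tailP mu y"
proof -
  obtain J1 where J1: "\<And>i t. i \<ge> J1 \<Longrightarrow> L (2^(i+t)) \<le> 2^t * L (2^i) \<and> L (2^i) \<le> 2^t * L (2^(i+t))"
    using L_dyadic_growth[of 2] by auto
  obtain J2 where J2: "\<And>i x. i \<ge> J2 \<Longrightarrow> x \<le> 2^(i+1) \<Longrightarrow> L (2^(i+1)) / 2^(i+4) \<le> tailP mu x"
    using tailP_dyadic_lower by blast
  define J where "J = max J1 J2"
  define c where "c = L (2^J) / 32"
  have "c / y^2 \<le> tailP mu y" if y: "y \<ge> 2^J" for y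
  proof -
    have "y \<ge> 1"
      using y one_le_power[of "2::real" J] by linarith
    then obtain i where i: "2^i \<le> y" "y < 2^(i+1)"
      by (rule real_dyadic_interval)
    have "(2::real)^J < 2^(i+1)"
      using y i by simp
    hence "J \<le> i"
      using power_strict_increasing_iff[of "2::real" J "i+1"] by simp
    have "L (2^J) \<le> 2^(i+1-J) * L (2^(i+1))"
      using J1[of J "i+1-J"] \<open>J \<le> i\<close> by (simp add: J_def)
    also have "\<dots> \<le> 2^(i+1) * L (2^(i+1))"
      using L_pos[of "2^(i+1)"] by (intro mult_right_mono power_increasing) auto
    finally have L_J: "L (2^J) \<le> 2^(i+1) * L (2^(i+1))" .
    have "c / y^2 \<le> c / (2^i)^2"
      using i L_pos[of "2^J"] unfolding c_def by (intro divide_left_mono power_mono) auto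
    also have "\<dots> \<le> 2^(i+1) * L (2^(i+1)) / (32 * (2^i)^2)"
      using L_J unfolding c_def divide_divide_eq_left by (intro divide_right_mono) auto
    also have "\<dots> = L (2^(i+1)) / 2^(i+4)"
      by (simp add: power_add power2_eq_square)
    also have "\<dots> \<le> tailP mu y"
      using J2[of i y] \<open>J \<le> i\<close> i by (simp add: J_def)
    finally show ?thesis .
  qed
  moreover have "c > 0"
    by (simp add: c_def L_pos)
  ultimately show ?thesis
    using that[of c "2^J"] by simp
qed

text \<open>Termwise, Bernoulli's inequality \<open>(1 - 1/x)^k \<ge> 1 - k/x\<close> makes each summand
  \<open>\<mu>\<^sub>k ((1 - 1/x)^k - 1 + k/x)\<close> of \<open>\<ell>\<^sub>\<star>(x)/x\<close> nonnegative, and at least \<open>\<mu>\<^sub>k k/(2x)\<close> once \<open>k \<ge> 2x\<close>.\<close>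
lemma lstar_lower_bound:
  assumes x: "x \<ge> 1"
  shows "tailE mu (2*x) / 2 \<le> lstar mu x"
proof -
  define s where "s = 1 - 1/x"
  have s: "0 \<le> s" "s \<le> 1"
    unfolding s_def using x by (auto simp: field_simps)
  have "summable (\<lambda>k. mu k * s^k)"
    using s by (intro summable_comparison_test[OF _ sums_summable[OF mu_sums]])
      (auto simp: mu_nonneg abs_mult power_le_one mult_left_le)
  hence G: "(\<lambda>k. mu k * s^k - mu k + real k * mu k / x) sums (Gmu mu s - 1 + 1/x)"
    unfolding Gmu_def by (intro sums_add sums_diff summable_sums mu_sums sums_divide mean_sums)
  have E: "(\<lambda>k. (if 2*x \<le> real k then real k * mu k else 0) / (2*x)) sums (tailE mu (2*x) / (2*x))"
    unfolding tailE_def by (intro sums_divide summable_sums[OF summable_tailE_terms])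
  have "(if 2*x \<le> real k then real k * mu k else 0) / (2*x) \<le> mu k * s^k - mu k + real k * mu k / x"
    for k
  proof -
    have "1 + real k * (-1/x) \<le> (1 + (-1/x))^k"
      by (rule Bernoulli_inequality) (use x in \<open>simp add: field_simps\<close>)
    hence "max 0 (real k / x - 1) \<le> s^k - 1 + real k / x"
      using s by (simp add: s_def)
    moreover have "(if 2*x \<le> real k then real k / (2*x) else 0) \<le> max 0 (real k / x - 1)"
      using x by (auto simp: field_simps)
    ultimately have "(if 2*x \<le> real k then real k / (2*x) else 0) \<le> s^k - 1 + real k / x"
      by linarith
    hence "mu k * (if 2*x \<le> real k then real k / (2*x) else 0) \<le> mu k * (s^k - 1 + real k / x)"
      by (intro mult_left_mono mu_nonneg)
    thus ?thesis
      by (cases "2*x \<le> real k") (simp_all add: algebra_simps)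
  qed
  hence "tailE mu (2*x) / (2*x) \<le> Gmu mu s - 1 + 1/x"
    using E G by (rule sums_le)
  hence "x * (tailE mu (2*x) / (2*x)) \<le> x * (Gmu mu s - 1 + 1/x)"
    using x by (intro mult_left_mono) auto
  thus ?thesis
    using x by (simp add: lstar_def s_def)
qed

lemma Vfun_upper_bound:
  assumes y: "y \<ge> 1"
  shows "0 \<le> Vfun mu y \<and> Vfun mu y \<le> 2 * ln y / tailE mu (2*y)"
proof -
  define F where "F x = 1 / (x * lstar mu x)" for x
  define c where "c = 2 / tailE mu (2*y)"
  have E_pos: "tailE mu (2*y) > 0"
    by (rule tailE_pos)
  have F_bounds: "0 \<le> F x \<and> F x \<le> c / x" if x: "x \<in> {1..y}" for x
  proof -
    have "tailE mu (2*y) \<le> tailE mu (2*x)"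
      using x by (intro tailE_antimono) auto
    also have "\<dots> / 2 \<le> lstar mu x"
      using x by (intro lstar_lower_bound) auto
    finally have l: "tailE mu (2*y) / 2 \<le> lstar mu x"
      by simp
    hence l_pos: "0 < lstar mu x"
      using E_pos by linarith
    have "F x = (1/x) * (1 / lstar mu x)"
      by (simp add: F_def)
    also have "\<dots> \<le> (1/x) * (1 / (tailE mu (2*y) / 2))"
      using l l_pos E_pos x by (intro mult_left_mono divide_left_mono) auto
    finally show ?thesis
      using x l_pos by (simp add: F_def c_def mult.commute)
  qed
  have c_int: "((\<lambda>x. c / x) has_integral (c * (ln y - ln 1))) {1..y}"
    by (rule has_integral_const_div) (use y in auto)
  show ?thesis
    \<comment> \<open>a non-integrable integrand makes \<open>Vfun mu y = 0\<close>, which satisfies the bound too\<close>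
  proof (cases "F integrable_on {1..y}")
    case True
    have "0 \<le> integral {1..y} F"
      by (rule integral_nonneg[OF True]) (use F_bounds in auto)
    moreover have "integral {1..y} F \<le> c * ln y"
      using integral_le[OF True has_integral_integrable[OF c_int]] F_bounds c_int
      by (simp add: integral_unique)
    ultimately show ?thesis
      unfolding Vfun_def F_def[symmetric] c_def by simp
  next
    case False
    hence "Vfun mu y = 0"
      unfolding Vfun_def F_def[symmetric] by (rule not_integrable_integral)
    thus ?thesis
      using y E_pos by simp
  qed
qed

lemma integrable_hseq_integrand:
  assumes T: "T \<ge> 1"
  shows "(\<lambda>x. 1 / (x * tailE mu x)) integrable_on {1..T}"
proof -
  have "mono (\<lambda>x. - tailE mu x)"
    by (auto intro!: monoI tailE_antimono)
  hence "(\<lambda>x. - (- tailE mu x)) \<in> borel_measurable borel"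
    by (intro borel_measurable_uminus borel_measurable_mono)
  hence meas: "(\<lambda>x. 1 / (x * tailE mu x)) \<in> borel_measurable (lebesgue_on {1..T})"
    by (intro measurable_restrict_space1 measurable_completion) simp
  show ?thesis
  proof (rule measurable_bounded_by_integrable_imp_integrable_real[OF meas])
    show "(\<lambda>_. 1 / tailE mu T) integrable_on {1..T}"
      by (rule integrable_const_ivl)
    fix x assume x: "x \<in> {1..T}"
    have "tailE mu T \<le> 1 * tailE mu x"
      using x by (simp add: tailE_antimono)
    also have "\<dots> \<le> x * tailE mu x"
      using x tailE_pos[of x] by (intro mult_right_mono) auto
    finally show "\<bar>1 / (x * tailE mu x)\<bar> \<le> 1 / tailE mu T"
      using x tailE_pos[of x] tailE_pos[of T] by (simp add: divide_left_mono)
  qed simp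
qed

lemma integral_hseq_integrand_lower:
  assumes M: "M > 0" and x0: "x0 \<ge> 1" and Ex0: "\<And>x. x \<ge> x0 \<Longrightarrow> tailE mu x \<le> 1 / M"
    and T: "T \<ge> x0"
  shows "M * (ln T - ln x0) \<le> integral {1..T} (\<lambda>x. 1 / (x * tailE mu x))"
proof -
  define F where "F x = 1 / (x * tailE mu x)" for x
  have T1: "T \<ge> 1" using x0 T by simp
  have I1: "F integrable_on {1..T}" unfolding F_def by (rule integrable_hseq_integrand[OF T1])
  have I2: "F integrable_on {x0..T}"
    by (rule integrable_on_subinterval[OF I1]) (use x0 in auto)
  have Fnn: "0 \<le> F x" if "x \<ge> 1" for x using that tailE_pos[of x] unfolding F_def by simp
  have "integral {x0..T} F \<le> integral {1..T} F"
    by (rule integral_subset_le[OF _ I2 I1]) (use x0 Fnn in auto)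
  moreover have "integral {x0..T} (\<lambda>x. M / x) \<le> integral {x0..T} F"
  proof (rule integral_le[OF _ I2])
    show "(\<lambda>x. M / x) integrable_on {x0..T}"
      using has_integral_integrable[OF has_integral_const_div[of x0 T M]] x0 T by simp
    fix x assume x: "x \<in> {x0..T}"
    have Ex: "tailE mu x \<le> 1 / M" "tailE mu x > 0" using Ex0 x tailE_pos by auto
    have xp: "x > 0" using x x0 by auto
    have "M * tailE mu x \<le> 1" using Ex M by (simp add: field_simps)
    hence "M * (x * tailE mu x) \<le> x" using xp by (simp add: algebra_simps mult_left_le)
    thus "M / x \<le> F x" unfolding F_def using xp Ex by (simp add: field_simps)
  qed
  moreover have "integral {x0..T} (\<lambda>x. M / x) = M * (ln T - ln x0)"
    using has_integral_const_div[of x0 T M] x0 T by (simp add: integral_unique)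
  ultimately show ?thesis unfolding F_def by simp
qed

lemma bseq_bounds:
  assumes a: "a n \<ge> 1"
  shows "0 \<le> bseq mu a n \<and> bseq mu a n \<le> real n * tailE mu (a n)"
proof -
  define g where "g k = (if \<bar>real k - 1\<bar> > a n then (real k - 1) * mu k else 0)" for k
  have g: "0 \<le> g k \<and> g k \<le> (if a n \<le> real k then real k * mu k else 0)" for k
  proof (cases "\<bar>real k - 1\<bar> > a n")
    case True
    hence "real k - 1 > a n"
      using a by (cases k) auto
    thus ?thesis
      using True mu_nonneg[of k] a unfolding g_def by (auto intro: mult_right_mono)
  qed (use mu_nonneg in \<open>auto simp: g_def\<close>)
  have "summable g"
    by (rule summable_comparison_test[OF _ summable_tailE_terms[of "a n"]]) (use g in auto)
  hence "0 \<le> suminf g" "suminf g \<le> tailE mu (a n)"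
    unfolding tailE_def using g
    by (auto intro: suminf_nonneg[of g] suminf_le[OF _ _ summable_tailE_terms])
  thus ?thesis
    unfolding bseq_def g_def[symmetric] by (auto intro: mult_left_mono)
qed

end

locale normalised_critical_slowly_varying = critical_slowly_varying +
  fixes a :: "nat \<Rightarrow> real"
  assumes normalisation: "(\<lambda>n. real n * tailP mu (a n)) \<longlonglongrightarrow> 1"
begin

lemma eventually_normalisation_bounds:
  "eventually (\<lambda>n. 1/2 \<le> real n * tailP mu (a n) \<and> real n * tailP mu (a n) \<le> 2) sequentially"
proof -
  have h1: "(1/2::real) < 1" and h2: "(1::real) < 2"
    by simp_all
  show ?thesis
    using eventually_conj[OF order_tendstoD(1)[OF normalisation h1] order_tendstoD(2)[OF normalisation h2]]
    by eventually_elim auto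
qed

lemma eventually_a_ge_root: "eventually (\<lambda>n. real n powr (1/4) \<le> a n) sequentially"
proof -
  obtain c Y where c: "c > 0" and cY: "\<And>y. y \<ge> Y \<Longrightarrow> c / y^2 \<le> tailP mu y"
    using tailP_quadratic_lower by blast
  have "eventually (\<lambda>n. 2 / real n < c / (real n powr (1/4))^2) sequentially"
    using c by real_asymp
  moreover have "eventually (\<lambda>n. Y \<le> real n powr (1/4)) sequentially"
    by real_asymp
  ultimately show ?thesis
    using eventually_normalisation_bounds eventually_gt_at_top[of 0]
  proof eventually_elim
    case (elim n)
    show ?case
    proof (rule ccontr)
      assume "\<not> ?case"
      hence "c / (real n powr (1/4))^2 \<le> tailP mu (a n)"
        using cY[of "real n powr (1/4)"] tailP_antimono[of "a n" "real n powr (1/4)"] elim(2) by simp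
      hence "2 / real n < tailP mu (a n)"
        using elim(1) by linarith
      thus False
        using elim(3,4) by (simp add: field_simps)
    qed
  qed
qed

lemma eventually_mean_scale_ge_root:
  "eventually (\<lambda>n. real n powr (1/5) \<le> real n * tailE mu (a n)) sequentially"
proof -
  have "eventually (\<lambda>n. real n powr (1/5) \<le> real n powr (1/4) / 2) sequentially"
    by real_asymp
  thus ?thesis
    using eventually_a_ge_root eventually_normalisation_bounds eventually_gt_at_top[of 0]
  proof eventually_elim
    case (elim n)
    have a_nonneg: "a n \<ge> 0"
      using elim(2) by (smt (verit) powr_ge_zero)
    have "a n * (1/2) \<le> a n * (real n * tailP mu (a n))"
      using elim(3) a_nonneg by (intro mult_left_mono) auto
    also have "\<dots> \<le> real n * tailE mu (a n)"
      using mult_tailP_le_tailE[OF a_nonneg] elim(4) by (simp add: mult.left_commute mult_left_mono)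
    finally show ?case
      using elim(1,2) by linarith
  qed
qed

lemma hseq_over_ln_tendsto: "filterlim (\<lambda>n. hseq mu a n / ln (real n)) at_top sequentially"
  unfolding filterlim_at_top
proof
  fix Z :: real
  define M where "M = max Z 1"
  have M: "M > 0"
    unfolding M_def by simp
  obtain x1 where x1: "\<And>x. x \<ge> x1 \<Longrightarrow> tailE mu x < 1 / (10 * M)"
    using order_tendstoD(2)[OF tailE_tendsto_0, of "1 / (10 * M)"] M
    by (auto simp: eventually_at_top_linorder)
  define x0 where "x0 = max x1 1"
  have x0: "x0 \<ge> 1" "\<And>x. x \<ge> x0 \<Longrightarrow> tailE mu x \<le> 1 / (10 * M)"
    unfolding x0_def using x1 by (auto intro: less_imp_le)
  have "eventually (\<lambda>n. x0 \<le> real n powr (1/5)) sequentially"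
    by real_asymp
  moreover have "eventually (\<lambda>n. max (10 * ln x0) 1 \<le> ln (real n)) sequentially"
    by real_asymp
  ultimately show "eventually (\<lambda>n. Z \<le> hseq mu a n / ln (real n)) sequentially"
    using eventually_mean_scale_ge_root eventually_gt_at_top[of 0]
  proof eventually_elim
    case (elim n)
    define T where "T = real n * tailE mu (a n)"
    have "ln (real n) / 5 \<le> ln T"
      using elim(3,4) ln_mono[of "real n powr (1/5)" T] by (simp add: T_def)
    hence "ln (real n) \<le> 10 * (ln T - ln x0)"
      using elim(2) by simp
    hence "M * ln (real n) \<le> 10 * M * (ln T - ln x0)"
      using M by (simp add: mult_left_mono)
    also have "\<dots> \<le> hseq mu a n"
      unfolding hseq_def T_def[symmetric]
      using elim(1,3) x0 by (intro integral_hseq_integrand_lower) (auto simp: T_def M)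
    finally have "M * ln (real n) \<le> hseq mu a n" .
    moreover have "Z * ln (real n) \<le> M * ln (real n)"
      using elim(2) by (intro mult_right_mono) (auto simp: M_def)
    ultimately have "Z * ln (real n) \<le> hseq mu a n"
      by linarith
    thus ?case
      using elim(2) by (simp add: field_simps)
  qed
qed

lemma bseq_Vfun_bigo: "(\<lambda>n. bseq mu a n * Vfun mu (bseq mu a n)) \<in> O(\<lambda>n. real n * ln (real n))"
proof (rule bigoI[where c = 4])
  obtain X where X: "\<And>x n. x \<ge> X \<Longrightarrow> real n * tailP mu x \<le> 2 \<Longrightarrow>
      tailE mu x \<le> 2 * tailE mu (2 * real n * tailE mu x)"
    using tailE_stable_at_scale by blast
  have "eventually (\<lambda>n. max X 1 \<le> real n powr (1/4)) sequentially"
    by real_asymp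
  hence "eventually (\<lambda>n. max X 1 \<le> a n) sequentially"
    using eventually_a_ge_root by eventually_elim auto
  thus "eventually (\<lambda>n. norm (bseq mu a n * Vfun mu (bseq mu a n)) \<le> 4 * norm (real n * ln (real n)))
      sequentially"
    using eventually_normalisation_bounds eventually_gt_at_top[of 0]
  proof eventually_elim
    case (elim n)
    define b where "b = bseq mu a n"
    define T where "T = real n * tailE mu (a n)"
    have n: "real n \<ge> 1" "ln (real n) \<ge> 0"
      using elim(3) by auto
    have b: "0 \<le> b" "b \<le> T"
      using bseq_bounds[of a n] elim(1) by (auto simp: b_def T_def)
    have "T \<le> real n"
      using tailE_le_1[of "a n"] n by (simp add: T_def mult_left_le)
    have E_a: "tailE mu (a n) \<le> 2 * tailE mu (2 * T)"
      using X[of "a n" n] elim(1,2) by (simp add: T_def mult.assoc)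
    have "0 \<le> b * Vfun mu b \<and> b * Vfun mu b \<le> 4 * real n * ln (real n)"
    proof (cases "b < 1")
      case True
      thus ?thesis using n by (simp add: Vfun_def)
    next
      case False
      have V: "0 \<le> Vfun mu b" "Vfun mu b \<le> 2 * ln b / tailE mu (2 * b)"
        using Vfun_upper_bound[of b] False by auto
      have "2 * ln b / tailE mu (2 * b) \<le> 2 * ln (real n) / tailE mu (2 * T)"
        using False b \<open>T \<le> real n\<close> tailE_pos[of "2 * T"]
        by (intro frac_le tailE_antimono) auto
      hence "b * Vfun mu b \<le> T * (2 * ln (real n) / tailE mu (2 * T))"
        using V b False by (intro mult_mono) auto
      also have "\<dots> = 2 * real n * ln (real n) * (tailE mu (a n) / tailE mu (2 * T))"
        by (simp add: T_def field_simps)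
      also have "\<dots> \<le> 2 * real n * ln (real n) * 2"
        using E_a tailE_pos[of "2 * T"] n by (intro mult_left_mono) (auto simp: field_simps)
      finally show ?thesis
        using V b by simp
    qed
    thus ?case
      using n by (simp add: b_def)
  qed
qed

end

theorem mainTheorem11:
  fixes mu :: "nat \<Rightarrow> real" and a :: "nat \<Rightarrow> real"
  assumes "H_mu mu"
    and "(\<lambda>n. real n * tailP mu (a n)) \<longlonglongrightarrow> 1"
  shows "filterlim (\<lambda>n. hseq mu a n / ln (real n)) at_top sequentially \<and>
         (\<lambda>n. bseq mu a n * Vfun mu (bseq mu a n)) \<in> O(\<lambda>n. real n * ln (real n))"
proof -
  obtain L where "normalised_critical_slowly_varying mu L a"
    using assms unfolding H_mu_def normalised_critical_slowly_varying_def
      normalised_critical_slowly_varying_axioms_def critical_slowly_varying_def by blast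
  then interpret normalised_critical_slowly_varying mu L a .
  show ?thesis
    using hseq_over_ln_tendsto bseq_Vfun_bigo ..
qed

end
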